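(* Let $E$ be a finite set and let $f:\{0,1\}^E\to[0,1]$ be an increasing function. For any monotonic measure $\mu$ on $\{0,1\}^E$ and any decision tree $T$, $$\mathrm{Var}_\mu(f)\;\le\;\sum_{e\in E}\delta_e(f,T)\,\mathrm{Cov}_\mu(f,\omega_e),$$ where $\delta_e(f,T):=\mu\big[\exists\, t\le\tau(\omega):\ e_t=e\big]$ is the revealment of $f$ for $T$.
   Context: $\{0,1\}^E$ carries the coordinatewise partial order; $f$ is increasing if $\omega\le\omega'$ implies $f(\omega)\le f(\omega')$. A probability measure $\mu$ on $\{0,1\}^E$ is monotonic if for every $e\in E$, every $F\subset E$, and every $\xi,\zeta\in\{0,1\}^F$ with $\xi\le\zeta$, $\mu[\omega_{e'}=\xi_{e'}\ \forall e'\in F]>0$ and $\mu[\omega_{e'}=\zeta_{e'}\ \forall e'\in F]>0$, one has $\mu[\omega_e=1\mid \omega_{e'}=\xi_{e'}\ \forall e'\in F]\le\mu[\omega_e=1\mid \omega_{e'}=\zeta_{e'}\ \forall e'\in F]$. Let $n=|E|$. For an $n$-tuple $e=(e_1,\dots,e_n)$ write $e_{[t]}=(e_1,\dots,e_t)$ and $\omega_{e_{[t]}}=(\omega_{e_1},\dots,\omega_{e_t})$. A decision tree is a pair $T=(e_1,(\phi_t)_{2\le t\le n})$ where $e_1\in E$ and each $\phi_t$ maps a pair $((e_1,\dots,e_{t-1}),\omega_{(e_1,\dots,e_{t-1})})$ (distinct elements of $E$ and their values) to an element of $E\setminus\{e_1,\dots,e_{t-1}\}$. Given $\omega\in\{0,1\}^E$,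 running $T$ on $\omega$ produces the ordering $(e_1,\dots,e_n)$ of $E$ defined inductively by $e_t=\phi_t((e_1,\dots,e_{t-1}),\omega_{(e_1,\dots,e_{t-1})})$ for $t\ge2$. Set $\tau(\omega)=\tau_{f,T}(\omega):=\min\{t\ge1:\ \forall\omega'\in\{0,1\}^E,\ \omega'_{e_{[t]}}=\omega_{e_{[t]}}\Rightarrow f(\omega')=f(\omega)\}$. *)

theory Defs
  imports "HOL-Probability.Probability"
begin

text \<open>Configurations: the ground set E is a finite type 'e; a configuration is 'e \<Rightarrow> bool
  (True = 1, False = 0), ordered coordinatewise by the function order on bool.\<close>

definition cylinder :: "'e set \<Rightarrow> ('e \<Rightarrow> bool) \<Rightarrow> ('e \<Rightarrow> bool) set" where
  "cylinder F \<xi> = {\<omega>. \<forall>e'\<in>F. \<omega> e' = \<xi> e'}"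

definition monotonic_measure :: "('e::finite \<Rightarrow> bool) pmf \<Rightarrow> bool" where
  "monotonic_measure \<mu> \<longleftrightarrow>
     (\<forall>e F \<xi> \<zeta>. (\<forall>e'\<in>F. \<xi> e' \<le> \<zeta> e') \<longrightarrow>
        measure_pmf.prob \<mu> (cylinder F \<xi>) > 0 \<longrightarrow> measure_pmf.prob \<mu> (cylinder F \<zeta>) > 0 \<longrightarrow>
        measure_pmf.prob \<mu> ({\<omega>. \<omega> e} \<inter> cylinder F \<xi>) / measure_pmf.prob \<mu> (cylinder F \<xi>)
        \<le> measure_pmf.prob \<mu> ({\<omega>. \<omega> e} \<inter> cylinder F \<zeta>) / measure_pmf.prob \<mu> (cylinder F \<zeta>))"

text \<open>A decision tree (e_1, (phi_t)) is encoded by one function on histories: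
  given the revealed history [(e_1,\<omega>_{e_1}),...,(e_{t-1},\<omega>_{e_{t-1}})] it returns e_t;
  e_1 is its value on the empty history.\<close>

definition decision_tree :: "(('e::finite \<times> bool) list \<Rightarrow> 'e) \<Rightarrow> bool" where
  "decision_tree \<phi> \<longleftrightarrow>
     (\<forall>h. distinct (map fst h) \<and> length h < CARD('e) \<longrightarrow> \<phi> h \<notin> set (map fst h))"

fun dt_order :: "(('e \<times> bool) list \<Rightarrow> 'e) \<Rightarrow> ('e \<Rightarrow> bool) \<Rightarrow> nat \<Rightarrow> 'e list" where
  "dt_order \<phi> \<omega> 0 = []"
| "dt_order \<phi> \<omega> (Suc t) =
     (let es = dt_order \<phi> \<omega> t in es @ [\<phi> (map (\<lambda>e. (e, \<omega> e)) es)])"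

definition tau :: "(('e \<Rightarrow> bool) \<Rightarrow> real) \<Rightarrow> (('e \<times> bool) list \<Rightarrow> 'e) \<Rightarrow> ('e \<Rightarrow> bool) \<Rightarrow> nat" where
  "tau f \<phi> \<omega> = (LEAST t. t \<ge> 1 \<and>
      (\<forall>\<omega>'. (\<forall>e\<in>set (dt_order \<phi> \<omega> t). \<omega>' e = \<omega> e) \<longrightarrow> f \<omega>' = f \<omega>))"

definition revealment :: "('e \<Rightarrow> bool) pmf \<Rightarrow> (('e \<Rightarrow> bool) \<Rightarrow> real) \<Rightarrow> (('e \<times> bool) list \<Rightarrow> 'e) \<Rightarrow> 'e \<Rightarrow> real" where
  "revealment \<mu> f \<phi> e =
     measure_pmf.prob \<mu> {\<omega>. \<exists>t. 1 \<le> t \<and> t \<le> tau f \<phi> \<omega> \<and> dt_order \<phi> \<omega> t ! (t - 1) = e}"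

definition covariance_pmf :: "'a pmf \<Rightarrow> ('a \<Rightarrow> real) \<Rightarrow> ('a \<Rightarrow> real) \<Rightarrow> real" where
  "covariance_pmf \<mu> X Y = measure_pmf.expectation \<mu> (\<lambda>\<omega>. (X \<omega> - measure_pmf.expectation \<mu> X) * (Y \<omega> - measure_pmf.expectation \<mu> Y))"

end

theory Submission
  imports Defs
begin

text \<open>Reveal two configurations \<omega>, \<omega>' coordinate by coordinate along the decision tree run on
  \<omega>; at each step the queried bit is drawn for both either independently or from the maximal
  coupling of their two conditional laws. With the first t steps independent and the others
  coupled, E[f(\<omega>) f(\<omega>')] is E[f^2] for t = 0 and E[f]^2 for t = n, so Var f telescopes into
  the effects of switching a single step t. Switching step t costs at most the conditional
  covariance of f with the queried bit given the values revealed in \<omega>', and nothing once the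
  values revealed in \<omega> determine f, i.e. from step \<tau> on. Monotonicity of \<mu> makes conditional
  expectations of increasing functions increasing in the boundary condition; this controls the
  coupled continuation, and through the law of total covariance it lets the conditional
  covariances be replaced by Cov(f, \<omega>_e). Averaging over the explored paths and summing over t
  gives the revealment bound.\<close>

section \<open>Couplings of two and three bits\<close>

lemma sum_UNIV_bool: "(\<Sum>a\<in>UNIV. g a) = g True + (g False :: real)"
  by (simp add: UNIV_bool)

text \<open>The joint law of a Bernoulli(p) bit a and a Bernoulli(q) bit b: independent if the flag
  is set, otherwise the maximal coupling, which makes a = b as likely as possible.\<close>

definition bit_coupling :: "bool \<Rightarrow> real \<Rightarrow> real \<Rightarrow> bool \<Rightarrow> bool \<Rightarrow> real" where
  "bit_coupling indep p q a b =
     (if indep then (if a then p else 1 - p) * (if b then q else 1 - q)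
      else if a then (if b then min p q else p - min p q)
      else (if b then q - min p q else 1 - max p q))"

text \<open>A law of three bits (a, b, c) whose (a, b) and (a, c) marginals are the maximal couplings
  of Bernoulli(p) with Bernoulli(q1) and Bernoulli(q0), and under which c \<le> b when q0 \<le> q1.\<close>

definition bit_coupling3 :: "real \<Rightarrow> real \<Rightarrow> real \<Rightarrow> bool \<Rightarrow> bool \<Rightarrow> bool \<Rightarrow> real" where
  "bit_coupling3 p q1 q0 a b c =
     (if b then (if c then (if a then min p q0 else q0 - min p q0)
                 else (if a then max 0 (min p q1 - q0) else (q1 - q0) - max 0 (min p q1 - q0)))
      else (if c then 0 else (if a then max 0 (p - q1) else 1 - max p q1)))"

lemma bit_coupling_indep: "bit_coupling True p q a b = (if a then p else 1 - p) * (if b then q else 1 - q)"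
  unfolding bit_coupling_def by simp

lemma bit_coupling_diag: "bit_coupling False p p a b = (if a = b then (if a then p else 1 - p) else 0)"
  unfolding bit_coupling_def by (cases a; cases b) auto

lemma bit_coupling_marginal2: "(\<Sum>a\<in>UNIV. bit_coupling indep p q a b) = (if b then q else 1 - q)"
  unfolding sum_UNIV_bool bit_coupling_def by (cases indep; cases b) (auto simp: min_def max_def algebra_simps)

lemma bit_coupling_nonneg:
  "0 \<le> p \<Longrightarrow> p \<le> 1 \<Longrightarrow> 0 \<le> q \<Longrightarrow> q \<le> 1 \<Longrightarrow> 0 \<le> bit_coupling indep p q a b"
  unfolding bit_coupling_def by (cases indep; cases a; cases b) (auto simp: min_def max_def)

lemma bit_coupling_posD:
  assumes "0 \<le> p" "p \<le> 1" "0 \<le> q" "q \<le> 1" "0 < bit_coupling indep p q a b"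
  shows "(a \<longrightarrow> 0 < p) \<and> (\<not> a \<longrightarrow> p < 1) \<and> (b \<longrightarrow> 0 < q) \<and> (\<not> b \<longrightarrow> q < 1)"
  using assms unfolding bit_coupling_def
  by (cases indep; cases a; cases b) (auto simp: min_def max_def zero_less_mult_iff split: if_splits)

lemma bit_coupling_coupled_minus_indep:
  "bit_coupling False p q a b - bit_coupling True p q a b = (if a = b then 1 else -1) * (min p q - p * q)"
  unfolding bit_coupling_def by (cases a; cases b) (auto simp: min_def max_def algebra_simps)

lemma min_minus_mult_bounds:
  assumes "0 \<le> p" "p \<le> 1" "0 \<le> q" "q \<le> (1::real)"
  shows "0 \<le> min p q - p * q" "min p q - p * q \<le> q * (1 - q)"
    and "0 < min p q - p * q \<Longrightarrow> 0 < p \<and> p < 1 \<and> 0 < q \<and> q < 1"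
proof -
  have "p * q \<le> p" "p * q \<le> q" using assms by (auto simp: mult_left_le mult_left_le_one_le)
  then show "0 \<le> min p q - p * q" by simp
  show "min p q - p * q \<le> q * (1 - q)"
  proof (cases "p \<le> q")
    case True
    then have "p * (1 - q) \<le> q * (1 - q)" using assms by (intro mult_right_mono) auto
    then show ?thesis using True by (simp add: algebra_simps)
  next
    case False
    then have "q * (1 - p) \<le> q * (1 - q)" using assms by (intro mult_left_mono) auto
    then show ?thesis using False by (simp add: algebra_simps)
  qed
  assume pos: "0 < min p q - p * q"
  have "p \<noteq> 0" "q \<noteq> 0" using pos by auto
  moreover have "p \<noteq> 1" "q \<noteq> 1" using pos assms by (auto simp: min_def)
  ultimately show "0 < p \<and> p < 1 \<and> 0 < q \<and> q < 1" using assms by auto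
qed

context
  fixes p q1 q0 :: real
  assumes bounds: "0 \<le> p" "p \<le> 1" "0 \<le> q0" "q0 \<le> q1" "q1 \<le> 1"
begin

lemma bit_coupling3_nonneg: "0 \<le> bit_coupling3 p q1 q0 a b c"
  using bounds unfolding bit_coupling3_def by (cases a; cases b; cases c) (auto simp: min_def max_def)

lemma bit_coupling3_marginal_ab: "(\<Sum>c\<in>UNIV. bit_coupling3 p q1 q0 a b c) = bit_coupling False p q1 a b"
  using bounds unfolding bit_coupling3_def bit_coupling_def sum_UNIV_bool
  by (cases a; cases b) (auto simp: min_def max_def)

lemma bit_coupling3_marginal_ac: "(\<Sum>b\<in>UNIV. bit_coupling3 p q1 q0 a b c) = bit_coupling False p q0 a c"
  using bounds unfolding bit_coupling3_def bit_coupling_def sum_UNIV_bool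
  by (cases a; cases c) (auto simp: min_def max_def)

lemma bit_coupling3_posD:
  "0 < bit_coupling3 p q1 q0 a b c \<Longrightarrow> (c \<longrightarrow> b) \<and> (a \<longrightarrow> 0 < p) \<and> (\<not> a \<longrightarrow> p < 1) \<and>
     (b \<longrightarrow> 0 < q1) \<and> (\<not> b \<longrightarrow> q1 < 1) \<and> (c \<longrightarrow> 0 < q0) \<and> (\<not> c \<longrightarrow> q0 < 1)"
  using bounds unfolding bit_coupling3_def
  by (cases a; cases b; cases c) (auto simp: min_def max_def split: if_splits)

end

lemma coupled_sums_diff_bounds:
  fixes w :: "bool \<Rightarrow> bool \<Rightarrow> bool \<Rightarrow> real" and K1 K0 w1 w0 :: "bool \<Rightarrow> bool \<Rightarrow> real"
    and E1 E0 :: "bool \<Rightarrow> real"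
  assumes w1: "\<And>a b. w1 a b = (\<Sum>c\<in>UNIV. w a b c)"
    and w0: "\<And>a c. w0 a c = (\<Sum>b\<in>UNIV. w a b c)"
    and nonneg: "\<And>a b c. 0 \<le> w a b c"
    and bounds: "\<And>a b c. 0 < w a b c \<Longrightarrow> 0 \<le> K1 a b - K0 a c \<and> K1 a b - K0 a c \<le> E1 b - E0 c"
  defines "D \<equiv> (\<Sum>a\<in>UNIV. \<Sum>b\<in>UNIV. w1 a b * K1 a b) - (\<Sum>a\<in>UNIV. \<Sum>c\<in>UNIV. w0 a c * K0 a c)"
  shows "0 \<le> D \<and> D \<le> (\<Sum>b\<in>UNIV. (\<Sum>a\<in>UNIV. w1 a b) * E1 b) - (\<Sum>c\<in>UNIV. (\<Sum>a\<in>UNIV. w0 a c) * E0 c)"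
proof -
  have weighted: "0 \<le> w a b c * (K1 a b - K0 a c) \<and> w a b c * (K1 a b - K0 a c) \<le> w a b c * (E1 b - E0 c)"
    for a b c
    using nonneg[of a b c] bounds[of a b c] by (cases "w a b c = 0") (auto intro: mult_left_mono)
  have D: "D = (\<Sum>a\<in>UNIV. \<Sum>b\<in>UNIV. \<Sum>c\<in>UNIV. w a b c * (K1 a b - K0 a c))"
    unfolding D_def w1 w0 sum_UNIV_bool by (simp add: algebra_simps)
  have E: "(\<Sum>b\<in>UNIV. (\<Sum>a\<in>UNIV. w1 a b) * E1 b) - (\<Sum>c\<in>UNIV. (\<Sum>a\<in>UNIV. w0 a c) * E0 c)
     = (\<Sum>a\<in>UNIV. \<Sum>b\<in>UNIV. \<Sum>c\<in>UNIV. w a b c * (E1 b - E0 c))"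
    unfolding w1 w0 sum_UNIV_bool by (simp add: algebra_simps)
  show ?thesis unfolding D E using weighted by (auto intro!: sum_nonneg sum_mono)
qed

lemma mixture_mono:
  fixes q0 q1 A0 A1 B0 B1 :: real
  assumes "0 \<le> q0" "q0 \<le> q1" "q1 \<le> 1"
    and AB0: "q0 < 1 \<Longrightarrow> q1 < 1 \<Longrightarrow> A0 \<le> B0"
    and AB1: "0 < q0 \<Longrightarrow> A1 \<le> B1"
    and A0B1: "q0 < 1 \<Longrightarrow> 0 < q1 \<Longrightarrow> A0 \<le> B1"
    and A01: "0 < q0 \<Longrightarrow> q0 < 1 \<Longrightarrow> A0 \<le> A1"
  shows "q0 * A1 + (1 - q0) * A0 \<le> q1 * B1 + (1 - q1) * B0"
proof -
  consider "q0 = 0" | "q0 = 1" | "0 < q0" "q0 < 1" using assms(1-3) by fastforce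
  then show ?thesis
  proof cases
    case 1
    have "q1 * A0 \<le> q1 * B1" using A0B1 1 assms by (cases "q1 = 0") (auto intro!: mult_left_mono)
    moreover have "(1 - q1) * A0 \<le> (1 - q1) * B0"
      using AB0 1 assms by (cases "q1 = 1") (auto intro!: mult_left_mono)
    ultimately show ?thesis using 1 by (simp add: algebra_simps)
  next
    case 2
    then show ?thesis using assms AB1 by simp
  next
    case 3
    have "q0 * (A1 - A0) \<le> q1 * (A1 - A0)" using A01 3 assms by (intro mult_right_mono) auto
    moreover have "q1 * A1 \<le> q1 * B1" using AB1 3 assms by (intro mult_left_mono) auto
    moreover have "(1 - q1) * A0 \<le> (1 - q1) * B0"
      using AB0 3 assms by (cases "q1 = 1") (auto intro!: mult_left_mono)
    ultimately show ?thesis by (auto simp: algebra_simps)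
  qed
qed

section \<open>Conditional expectations on cylinders\<close>

lemma cylinder_split:
  assumes "e \<notin> F"
  shows "cylinder F \<xi> = cylinder (insert e F) (\<xi>(e:=True)) \<union> cylinder (insert e F) (\<xi>(e:=False))"
    and "cylinder (insert e F) (\<xi>(e:=True)) \<inter> cylinder (insert e F) (\<xi>(e:=False)) = {}"
  using assms unfolding cylinder_def by (auto split: if_splits)

lemma cylinder_insert_subset: "e \<notin> F \<Longrightarrow> cylinder (insert e F) (\<xi>(e:=a)) \<subseteq> cylinder F \<xi>"
  unfolding cylinder_def by auto

lemma Collect_inter_cylinder: "e \<notin> F \<Longrightarrow> {\<omega>. \<omega> e} \<inter> cylinder F \<xi> = cylinder (insert e F) (\<xi>(e:=True))"
  unfolding cylinder_def by auto

lemma cylinder_UNIV: "cylinder UNIV \<xi> = {\<xi>}"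
  unfolding cylinder_def by auto

lemma cylinder_empty: "cylinder {} \<xi> = UNIV"
  unfolding cylinder_def by auto

lemma cylinder_self: "\<xi> \<in> cylinder F \<xi>"
  unfolding cylinder_def by auto

lemma cylinder_eq: "\<omega> \<in> cylinder F \<xi> \<Longrightarrow> cylinder F \<omega> = cylinder F \<xi>"
  unfolding cylinder_def by auto

definition coord :: "'e \<Rightarrow> ('e \<Rightarrow> bool) \<Rightarrow> real" where
  "coord e \<omega> = (if \<omega> e then 1 else 0)"

lemma mono_coord: "mono (coord e)"
  unfolding mono_def coord_def le_fun_def by auto

locale cylinder_pmf =
  fixes \<mu> :: "('e::finite \<Rightarrow> bool) pmf"
begin

definition cyl_sum :: "'e set \<Rightarrow> ('e \<Rightarrow> bool) \<Rightarrow> (('e \<Rightarrow> bool) \<Rightarrow> real) \<Rightarrow> real" where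
  "cyl_sum F \<xi> g = (\<Sum>\<omega>\<in>cylinder F \<xi>. pmf \<mu> \<omega> * g \<omega>)"

definition cyl_prob :: "'e set \<Rightarrow> ('e \<Rightarrow> bool) \<Rightarrow> real" where
  "cyl_prob F \<xi> = cyl_sum F \<xi> (\<lambda>_. 1)"

text \<open>Conditional expectation given the values of \<xi> on F; it is 0 on null cylinders,
  where the division is by zero.\<close>

definition cyl_exp :: "(('e \<Rightarrow> bool) \<Rightarrow> real) \<Rightarrow> 'e set \<Rightarrow> ('e \<Rightarrow> bool) \<Rightarrow> real" where
  "cyl_exp g F \<xi> = cyl_sum F \<xi> g / cyl_prob F \<xi>"

definition cyl_bit_prob :: "'e set \<Rightarrow> ('e \<Rightarrow> bool) \<Rightarrow> 'e \<Rightarrow> real" where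
  "cyl_bit_prob F \<xi> e = cyl_prob (insert e F) (\<xi>(e:=True)) / cyl_prob F \<xi>"

definition cyl_cov :: "(('e \<Rightarrow> bool) \<Rightarrow> real) \<Rightarrow> (('e \<Rightarrow> bool) \<Rightarrow> real) \<Rightarrow> 'e set \<Rightarrow> ('e \<Rightarrow> bool) \<Rightarrow> real" where
  "cyl_cov g h F \<xi> = cyl_exp (\<lambda>\<omega>. g \<omega> * h \<omega>) F \<xi> - cyl_exp g F \<xi> * cyl_exp h F \<xi>"

lemma cyl_sum_split:
  "e \<notin> F \<Longrightarrow> cyl_sum F \<xi> g = cyl_sum (insert e F) (\<xi>(e:=True)) g + cyl_sum (insert e F) (\<xi>(e:=False)) g"
  unfolding cyl_sum_def by (subst cylinder_split(1), assumption, rule sum.union_disjoint)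
    (auto simp: cylinder_split(2))

lemma cyl_sum_cong: "(\<And>\<omega>. \<omega> \<in> cylinder F \<xi> \<Longrightarrow> g \<omega> = h \<omega>) \<Longrightarrow> cyl_sum F \<xi> g = cyl_sum F \<xi> h"
  unfolding cyl_sum_def by (rule sum.cong) auto

lemma cyl_sum_mono: "(\<And>\<omega>. g \<omega> \<le> h \<omega>) \<Longrightarrow> cyl_sum F \<xi> g \<le> cyl_sum F \<xi> h"
  unfolding cyl_sum_def by (rule sum_mono) (simp add: mult_left_mono)

lemma cyl_sum_nonneg: "(\<And>\<omega>. 0 \<le> g \<omega>) \<Longrightarrow> 0 \<le> cyl_sum F \<xi> g"
  unfolding cyl_sum_def by (simp add: sum_nonneg)

lemma cyl_sum_const: "cyl_sum F \<xi> (\<lambda>_. c) = c * cyl_prob F \<xi>"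
  unfolding cyl_sum_def cyl_prob_def by (simp add: sum_distrib_left mult.commute)

lemma cyl_prob_nonneg: "0 \<le> cyl_prob F \<xi>"
  unfolding cyl_prob_def by (rule cyl_sum_nonneg) simp

lemma cyl_sum_eq_0: assumes "cyl_prob F \<xi> = 0" shows "cyl_sum F \<xi> g = 0"
proof -
  have "\<forall>\<omega>\<in>cylinder F \<xi>. pmf \<mu> \<omega> * 1 = 0"
    using assms unfolding cyl_prob_def cyl_sum_def by (subst sum_nonneg_eq_0_iff[symmetric]) auto
  then show ?thesis unfolding cyl_sum_def by simp
qed

lemma cyl_prob_eq_prob: "cyl_prob F \<xi> = measure_pmf.prob \<mu> (cylinder F \<xi>)"
  unfolding cyl_prob_def cyl_sum_def by (simp add: measure_measure_pmf_finite)

lemma cyl_prob_empty: "cyl_prob {} \<xi> = 1"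
  using sum_pmf_eq_1[of UNIV \<mu>] unfolding cyl_prob_def cyl_sum_def cylinder_empty by simp

lemma cyl_exp_empty: "cyl_exp g {} \<xi> = measure_pmf.expectation \<mu> g"
  unfolding cyl_exp_def cyl_prob_empty cyl_sum_def cylinder_empty
  by (simp add: integral_measure_pmf_real[where A=UNIV] mult.commute)

lemma cyl_exp_const: "cyl_prob F \<xi> > 0 \<Longrightarrow> (\<forall>\<omega>\<in>cylinder F \<xi>. g \<omega> = c) \<Longrightarrow> cyl_exp g F \<xi> = c"
  unfolding cyl_exp_def by (subst cyl_sum_cong[where h="\<lambda>_. c"]) (auto simp: cyl_sum_const)

lemma cyl_exp_bounds:
  assumes "\<And>\<omega>. 0 \<le> g \<omega> \<and> g \<omega> \<le> 1"
  shows "0 \<le> cyl_exp g F \<xi>" "cyl_exp g F \<xi> \<le> 1"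
proof -
  have "0 \<le> cyl_sum F \<xi> g" by (rule cyl_sum_nonneg) (use assms in auto)
  then show "0 \<le> cyl_exp g F \<xi>" unfolding cyl_exp_def using cyl_prob_nonneg by simp
  have "cyl_sum F \<xi> g \<le> cyl_prob F \<xi>" unfolding cyl_prob_def by (rule cyl_sum_mono) (use assms in auto)
  then show "cyl_exp g F \<xi> \<le> 1" unfolding cyl_exp_def using cyl_prob_nonneg[of F \<xi>]
    by (cases "cyl_prob F \<xi> = 0") (auto simp: divide_le_eq_1)
qed

lemma cyl_prob_children:
  assumes "e \<notin> F"
  shows "cyl_prob (insert e F) (\<xi>(e:=True)) = cyl_bit_prob F \<xi> e * cyl_prob F \<xi>"
    and "cyl_prob (insert e F) (\<xi>(e:=False)) = (1 - cyl_bit_prob F \<xi> e) * cyl_prob F \<xi>"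
proof -
  have sum: "cyl_prob F \<xi> = cyl_prob (insert e F) (\<xi>(e:=True)) + cyl_prob (insert e F) (\<xi>(e:=False))"
    unfolding cyl_prob_def by (rule cyl_sum_split[OF assms])
  then show "cyl_prob (insert e F) (\<xi>(e:=True)) = cyl_bit_prob F \<xi> e * cyl_prob F \<xi>"
    using cyl_prob_nonneg[of "insert e F"] unfolding cyl_bit_prob_def
    by (cases "cyl_prob F \<xi> = 0") (auto simp: add_nonneg_eq_0_iff)
  then show "cyl_prob (insert e F) (\<xi>(e:=False)) = (1 - cyl_bit_prob F \<xi> e) * cyl_prob F \<xi>"
    using sum by (simp add: algebra_simps)
qed

lemma cyl_bit_prob_bounds:
  assumes "e \<notin> F"
  shows "0 \<le> cyl_bit_prob F \<xi> e" "cyl_bit_prob F \<xi> e \<le> 1"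
proof -
  have "cyl_prob (insert e F) (\<xi>(e:=True)) \<le> cyl_prob F \<xi>"
    using cyl_sum_split[OF assms, of \<xi> "\<lambda>_. 1"] cyl_prob_nonneg[of "insert e F" "\<xi>(e:=False)"]
    unfolding cyl_prob_def by simp
  then show "0 \<le> cyl_bit_prob F \<xi> e" "cyl_bit_prob F \<xi> e \<le> 1"
    unfolding cyl_bit_prob_def using cyl_prob_nonneg[of "insert e F" "\<xi>(e:=True)"] cyl_prob_nonneg[of F \<xi>]
    by (auto simp: divide_le_eq_1)
qed

lemma cyl_prob_pos_if_bit_prob_pos: "0 < cyl_bit_prob F \<xi> e \<Longrightarrow> 0 < cyl_prob F \<xi>"
  using cyl_prob_nonneg[of F \<xi>] unfolding cyl_bit_prob_def by (cases "cyl_prob F \<xi> = 0") auto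

lemma cyl_prob_child_pos:
  "e \<notin> F \<Longrightarrow> 0 < cyl_prob F \<xi> \<Longrightarrow> (a \<longrightarrow> 0 < cyl_bit_prob F \<xi> e) \<Longrightarrow> (\<not> a \<longrightarrow> cyl_bit_prob F \<xi> e < 1)
   \<Longrightarrow> 0 < cyl_prob (insert e F) (\<xi>(e:=a))"
  using cyl_prob_children[of e F \<xi>] cyl_bit_prob_bounds[of e F \<xi>] by (cases a) auto

lemma cyl_prob_children_pos:
  "e \<notin> F \<Longrightarrow> 0 < cyl_bit_prob F \<xi> e \<Longrightarrow> cyl_bit_prob F \<xi> e < 1 \<Longrightarrow> 0 < cyl_prob (insert e F) (\<xi>(e:=a))"
  using cyl_prob_child_pos cyl_prob_pos_if_bit_prob_pos by blast

lemma cyl_exp_tower: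
  assumes "e \<notin> F"
  shows "cyl_exp g F \<xi> = cyl_bit_prob F \<xi> e * cyl_exp g (insert e F) (\<xi>(e:=True))
                       + (1 - cyl_bit_prob F \<xi> e) * cyl_exp g (insert e F) (\<xi>(e:=False))"
proof (cases "cyl_prob F \<xi> = 0")
  case True
  then show ?thesis using cyl_prob_children[OF assms, of \<xi>] by (simp add: cyl_exp_def cyl_bit_prob_def cyl_sum_eq_0)
next
  case False
  then have pos: "cyl_prob F \<xi> > 0" using cyl_prob_nonneg[of F \<xi>] by simp
  note children = cyl_prob_children[OF assms, of \<xi>]
  have weighted: "c * cyl_exp g (insert e F) (\<xi>(e:=a)) = cyl_sum (insert e F) (\<xi>(e:=a)) g / cyl_prob F \<xi>"
    if "cyl_prob (insert e F) (\<xi>(e:=a)) = c * cyl_prob F \<xi>" for a c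
  proof (cases "c = 0")
    case True
    then show ?thesis using that by (simp add: cyl_sum_eq_0)
  next
    case False
    then show ?thesis unfolding cyl_exp_def that using pos by (simp add: field_simps)
  qed
  show ?thesis
    unfolding weighted[OF children(1)] weighted[OF children(2)] cyl_exp_def[of g F]
      cyl_sum_split[OF assms, of \<xi> g] by (simp add: add_divide_distrib)
qed

lemma cyl_exp_tower_sum:
  "e \<notin> F \<Longrightarrow> (\<Sum>a\<in>UNIV. (if a then cyl_bit_prob F \<xi> e else 1 - cyl_bit_prob F \<xi> e) * cyl_exp g (insert e F) (\<xi>(e:=a)))
     = cyl_exp g F \<xi>"
  using cyl_exp_tower[of e F g \<xi>] by (simp add: sum_UNIV_bool)

lemma cyl_sum_coord_children:
  "cyl_sum (insert e F) (\<xi>(e:=True)) (\<lambda>\<omega>. g \<omega> * coord e \<omega>) = cyl_sum (insert e F) (\<xi>(e:=True)) g"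
  "cyl_sum (insert e F) (\<xi>(e:=False)) (\<lambda>\<omega>. g \<omega> * coord e \<omega>) = 0"
  by (auto simp: cyl_sum_def cylinder_def coord_def intro!: sum.cong sum.neutral)

lemma cyl_exp_coord: "e \<notin> F \<Longrightarrow> cyl_exp (coord e) F \<xi> = cyl_bit_prob F \<xi> e"
  using cyl_sum_coord_children[of e F \<xi> "\<lambda>_. 1"]
  unfolding cyl_exp_def cyl_bit_prob_def cyl_prob_def by (simp add: cyl_sum_split[of e F \<xi>])

lemma cyl_cov_coord:
  assumes "e \<notin> F"
  shows "cyl_cov g (coord e) F \<xi> = cyl_bit_prob F \<xi> e * (1 - cyl_bit_prob F \<xi> e) *
      (cyl_exp g (insert e F) (\<xi>(e:=True)) - cyl_exp g (insert e F) (\<xi>(e:=False)))"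
proof -
  have "cyl_exp (\<lambda>\<omega>. g \<omega> * coord e \<omega>) (insert e F) (\<xi>(e:=True)) = cyl_exp g (insert e F) (\<xi>(e:=True))"
    "cyl_exp (\<lambda>\<omega>. g \<omega> * coord e \<omega>) (insert e F) (\<xi>(e:=False)) = 0"
    unfolding cyl_exp_def cyl_sum_coord_children by simp_all
  then show ?thesis
    unfolding cyl_cov_def cyl_exp_coord[OF assms] cyl_exp_tower[OF assms, where g=g]
      cyl_exp_tower[OF assms, where g="\<lambda>\<omega>. g \<omega> * coord e \<omega>"]
    by (simp add: algebra_simps)
qed

lemma expectation_eq_sum: "measure_pmf.expectation \<mu> g = (\<Sum>\<omega>\<in>UNIV. pmf \<mu> \<omega> * g \<omega>)"
  by (simp add: integral_measure_pmf_real[where A=UNIV] mult.commute)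

lemma covariance_pmf_eq_cyl_cov: "covariance_pmf \<mu> g h = cyl_cov g h {} \<xi>"
proof -
  define a where "a = measure_pmf.expectation \<mu> g"
  define b where "b = measure_pmf.expectation \<mu> h"
  have "(\<Sum>\<omega>\<in>UNIV. pmf \<mu> \<omega> * ((g \<omega> - a) * (h \<omega> - b)))
      = (\<Sum>\<omega>\<in>UNIV. pmf \<mu> \<omega> * (g \<omega> * h \<omega>)) - a * (\<Sum>\<omega>\<in>UNIV. pmf \<mu> \<omega> * h \<omega>)
        - b * (\<Sum>\<omega>\<in>UNIV. pmf \<mu> \<omega> * g \<omega>) + a * b * (\<Sum>\<omega>\<in>UNIV. pmf \<mu> \<omega>)"
    by (simp add: sum_subtractf sum.distrib sum_distrib_left algebra_simps)
  then show ?thesis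
    unfolding covariance_pmf_def cyl_cov_def cyl_exp_empty expectation_eq_sum a_def[symmetric] b_def[symmetric]
    using sum_pmf_eq_1[of UNIV \<mu>] by (simp add: a_def b_def expectation_eq_sum)
qed

lemma variance_eq_cyl_cov: "measure_pmf.variance \<mu> g = cyl_cov g g {} \<xi>"
  unfolding covariance_pmf_eq_cyl_cov[symmetric] covariance_pmf_def by (simp add: power2_eq_square)

end

locale monotonic_pmf = cylinder_pmf \<mu> for \<mu> :: "('e::finite \<Rightarrow> bool) pmf" +
  assumes monotonic: "monotonic_measure \<mu>"
begin

lemma cyl_bit_prob_mono:
  assumes "e \<notin> F" "\<forall>e'\<in>F. \<xi> e' \<le> \<zeta> e'" "0 < cyl_prob F \<xi>" "0 < cyl_prob F \<zeta>"
  shows "cyl_bit_prob F \<xi> e \<le> cyl_bit_prob F \<zeta> e"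
  using monotonic assms unfolding monotonic_measure_def cyl_bit_prob_def cyl_prob_eq_prob
    Collect_inter_cylinder[OF assms(1), symmetric] by blast

lemma cyl_exp_mono:
  assumes "mono g" "\<forall>e\<in>F. \<xi> e \<le> \<zeta> e" "0 < cyl_prob F \<xi>" "0 < cyl_prob F \<zeta>"
  shows "cyl_exp g F \<xi> \<le> cyl_exp g F \<zeta>"
  using assms(2-)
proof (induction "card (- F)" arbitrary: F \<xi> \<zeta> rule: less_induct)
  case less
  show ?case
  proof (cases "F = UNIV")
    case True
    then have "\<xi> \<le> \<zeta>" using less.prems by (simp add: le_fun_def)
    moreover have "cyl_exp g F \<xi> = g \<xi>" "cyl_exp g F \<zeta> = g \<zeta>"
      using less.prems True by (auto intro: cyl_exp_const simp: cylinder_UNIV)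
    ultimately show ?thesis using assms(1) by (simp add: mono_def)
  next
    case False
    then obtain r where r: "r \<notin> F" by auto
    have IH: "cyl_exp g (insert r F) (\<xi>'(r:=c)) \<le> cyl_exp g (insert r F) (\<zeta>'(r:=b))"
      if "\<forall>e\<in>F. \<xi>' e \<le> \<zeta>' e" "c \<le> b" "0 < cyl_prob (insert r F) (\<xi>'(r:=c))"
         "0 < cyl_prob (insert r F) (\<zeta>'(r:=b))" for \<xi>' \<zeta>' c b
    proof (rule less.hyps)
      show "card (- insert r F) < card (- F)"
        using r by (metis Compl_iff card_Diff1_less Compl_insert finite)
    qed (use that in auto)
    define q0 where "q0 = cyl_bit_prob F \<xi> r"
    define q1 where "q1 = cyl_bit_prob F \<zeta> r"
    have q: "q0 \<le> q1" unfolding q0_def q1_def by (rule cyl_bit_prob_mono[OF r less.prems])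
    have bounds: "0 \<le> q0" "q1 \<le> 1" using cyl_bit_prob_bounds[OF r] q0_def q1_def by auto
    have pos_\<xi>: "0 < cyl_prob (insert r F) (\<xi>(r:=a))" if "a \<longrightarrow> 0 < q0" "\<not> a \<longrightarrow> q0 < 1" for a
      using cyl_prob_child_pos[OF r less.prems(2)] that q0_def by simp
    have pos_\<zeta>: "0 < cyl_prob (insert r F) (\<zeta>(r:=b))" if "b \<longrightarrow> 0 < q1" "\<not> b \<longrightarrow> q1 < 1" for b
      using cyl_prob_child_pos[OF r less.prems(3)] that q1_def by simp
    have "q0 * cyl_exp g (insert r F) (\<xi>(r:=True)) + (1 - q0) * cyl_exp g (insert r F) (\<xi>(r:=False))
        \<le> q1 * cyl_exp g (insert r F) (\<zeta>(r:=True)) + (1 - q1) * cyl_exp g (insert r F) (\<zeta>(r:=False))"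
      using q bounds by (intro mixture_mono IH less.prems(1) pos_\<xi> pos_\<zeta>) auto
    then show ?thesis unfolding cyl_exp_tower[OF r, of g \<xi>] cyl_exp_tower[OF r, of g \<zeta>] q0_def q1_def .
  qed
qed

lemma cyl_cov_coord_nonneg:
  assumes "mono g" "e \<notin> F"
  shows "0 \<le> cyl_cov g (coord e) F \<xi>"
proof (cases "0 < cyl_bit_prob F \<xi> e \<and> cyl_bit_prob F \<xi> e < 1")
  case True
  then have "cyl_exp g (insert e F) (\<xi>(e:=False)) \<le> cyl_exp g (insert e F) (\<xi>(e:=True))"
    by (intro cyl_exp_mono assms(1) cyl_prob_children_pos[OF assms(2)]) auto
  then show ?thesis unfolding cyl_cov_coord[OF assms(2)] using True by simp
next
  case False
  then have "cyl_bit_prob F \<xi> e = 0 \<or> cyl_bit_prob F \<xi> e = 1"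
    using cyl_bit_prob_bounds[OF assms(2), of \<xi>] by linarith
  then show ?thesis unfolding cyl_cov_coord[OF assms(2)] by auto
qed

text \<open>Law of total covariance: the covariance of the conditional expectations of g and h given
  \<omega> r is nonnegative, since both are increasing in \<omega> r.\<close>

lemma cyl_cov_children_le:
  assumes "mono g" "mono h" "r \<notin> F"
  shows "cyl_bit_prob F \<xi> r * cyl_cov g h (insert r F) (\<xi>(r:=True))
       + (1 - cyl_bit_prob F \<xi> r) * cyl_cov g h (insert r F) (\<xi>(r:=False)) \<le> cyl_cov g h F \<xi>"
proof -
  define u where "u = cyl_bit_prob F \<xi> r"
  define G1 where "G1 = cyl_exp g (insert r F) (\<xi>(r:=True))"
  define G0 where "G0 = cyl_exp g (insert r F) (\<xi>(r:=False))"
  define H1 where "H1 = cyl_exp h (insert r F) (\<xi>(r:=True))"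
  define H0 where "H0 = cyl_exp h (insert r F) (\<xi>(r:=False))"
  have "cyl_cov g h F \<xi>
        - (u * cyl_cov g h (insert r F) (\<xi>(r:=True)) + (1 - u) * cyl_cov g h (insert r F) (\<xi>(r:=False)))
      = u * (1 - u) * ((G1 - G0) * (H1 - H0))"
    unfolding cyl_cov_def cyl_exp_tower[OF assms(3), of g] cyl_exp_tower[OF assms(3), of h]
      cyl_exp_tower[OF assms(3), of "\<lambda>\<omega>. g \<omega> * h \<omega>"] u_def[symmetric]
      G1_def[symmetric] G0_def[symmetric] H1_def[symmetric] H0_def[symmetric]
    by algebra
  moreover have "0 \<le> u * (1 - u) * ((G1 - G0) * (H1 - H0))"
  proof (cases "0 < u \<and> u < 1")
    case True
    have "G0 \<le> G1" "H0 \<le> H1" unfolding G0_def G1_def H0_def H1_def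
      using True u_def by (intro cyl_exp_mono assms(1,2) cyl_prob_children_pos[OF assms(3)]; simp)+
    then show ?thesis using True by simp
  next
    case False
    then have "u = 0 \<or> u = 1" using cyl_bit_prob_bounds[OF assms(3), of \<xi>] u_def by linarith
    then show ?thesis by auto
  qed
  ultimately show ?thesis unfolding u_def by linarith
qed

end

section \<open>The hybrid coupling along the decision tree\<close>

locale osss = monotonic_pmf \<mu> for \<mu> :: "('e::finite \<Rightarrow> bool) pmf" +
  fixes f :: "('e \<Rightarrow> bool) \<Rightarrow> real" and \<phi> :: "('e \<times> bool) list \<Rightarrow> 'e"
  assumes mono_f: "mono f" and f_bounds: "\<And>\<omega>. 0 \<le> f \<omega> \<and> f \<omega> \<le> 1"
    and tree: "decision_tree \<phi>"
begin

definition query :: "'e list \<Rightarrow> ('e \<Rightarrow> bool) \<Rightarrow> 'e" where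
  "query es \<xi> = \<phi> (map (\<lambda>x. (x, \<xi> x)) es)"

definition valid_hist :: "'e list \<Rightarrow> nat \<Rightarrow> bool" where
  "valid_hist es k \<longleftrightarrow> distinct es \<and> length es + k \<le> CARD('e)"

definition determined :: "'e list \<Rightarrow> ('e \<Rightarrow> bool) \<Rightarrow> bool" where
  "determined es \<xi> \<longleftrightarrow> (\<forall>\<omega>\<in>cylinder (set es) \<xi>. f \<omega> = f \<xi>)"

lemma query_notin:
  assumes "valid_hist es (Suc k)"
  shows "query es \<xi> \<notin> set es"
proof -
  have fst_hist: "map fst (map (\<lambda>x. (x, \<xi> x)) es) = es" by (induction es) auto
  have "distinct (map fst (map (\<lambda>x. (x, \<xi> x)) es)) \<and> length (map (\<lambda>x. (x, \<xi> x)) es) < CARD('e)"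
    using assms unfolding fst_hist valid_hist_def by simp
  then have "\<phi> (map (\<lambda>x. (x, \<xi> x)) es) \<notin> set (map fst (map (\<lambda>x. (x, \<xi> x)) es))"
    using tree unfolding decision_tree_def by blast
  then show ?thesis unfolding fst_hist query_def .
qed

lemma valid_hist_snoc_query: "valid_hist es (Suc k) \<Longrightarrow> valid_hist (es @ [query es \<xi>]) k"
  using query_notin[of es k \<xi>] unfolding valid_hist_def by auto

lemma valid_hist_full: "valid_hist es 0 \<Longrightarrow> length es = CARD('e) \<Longrightarrow> set es = UNIV"
  unfolding valid_hist_def by (metis card_subset_eq distinct_card finite subset_UNIV)

lemma query_cylinder: "\<omega> \<in> cylinder (set es) \<xi> \<Longrightarrow> query es \<omega> = query es \<xi>"
  unfolding query_def cylinder_def by (auto intro!: arg_cong[where f=\<phi>])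

lemma determined_cylinder: "\<omega> \<in> cylinder (set es) \<xi> \<Longrightarrow> determined es \<omega> = determined es \<xi>"
  unfolding determined_def by (metis cylinder_eq cylinder_self)

text \<open>Two configurations are revealed along the decision tree run on the first one; the
  queried bit is drawn independently for both at step i if indep i holds, and from the
  maximal coupling otherwise. Starting from the partial configurations \<xi> and \<zeta> on the history
  es, with k steps to go, hybrid is the expectation of the product of the final values of f.\<close>

fun hybrid :: "(nat \<Rightarrow> bool) \<Rightarrow> nat \<Rightarrow> 'e list \<Rightarrow> ('e \<Rightarrow> bool) \<Rightarrow> ('e \<Rightarrow> bool) \<Rightarrow> real" where
  "hybrid indep 0 es \<xi> \<zeta> = cyl_exp f (set es) \<xi> * cyl_exp f (set es) \<zeta>"
| "hybrid indep (Suc k) es \<xi> \<zeta> =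
     (let e = query es \<xi>; p = cyl_bit_prob (set es) \<xi> e; q = cyl_bit_prob (set es) \<zeta> e in
     (\<Sum>a\<in>UNIV. \<Sum>b\<in>UNIV. bit_coupling (indep (length es)) p q a b * hybrid indep k (es @ [e]) (\<xi>(e:=a)) (\<zeta>(e:=b))))"

lemma hybrid_cong: "(\<forall>i\<ge>length es. indep i = indep' i) \<Longrightarrow> hybrid indep k es \<xi> \<zeta> = hybrid indep' k es \<xi> \<zeta>"
proof (induction k arbitrary: es \<xi> \<zeta>)
  case (Suc k)
  have eq: "hybrid indep k (es@[e]) (\<xi>(e:=a)) (\<zeta>(e:=b)) = hybrid indep' k (es@[e]) (\<xi>(e:=a)) (\<zeta>(e:=b))" for e a b
    by (rule Suc.IH) (use Suc.prems in auto)
  have "indep (length es) = indep' (length es)" using Suc.prems by auto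
  then show ?case by (simp only: hybrid.simps Let_def eq)
qed simp

lemma hybrid_all_indep:
  "valid_hist es k \<Longrightarrow> (\<forall>i. length es \<le> i \<longrightarrow> i < length es + k \<longrightarrow> indep i)
   \<Longrightarrow> hybrid indep k es \<xi> \<zeta> = cyl_exp f (set es) \<xi> * cyl_exp f (set es) \<zeta>"
proof (induction k arbitrary: es \<xi> \<zeta>)
  case 0
  then show ?case by simp
next
  case (Suc k)
  define e where "e = query es \<xi>"
  have e: "e \<notin> set es" using query_notin[OF Suc.prems(1)] e_def by simp
  have indep: "indep (length es)" using Suc.prems by auto
  have IH: "hybrid indep k (es @ [e]) (\<xi>(e:=a)) (\<zeta>(e:=b))
      = cyl_exp f (insert e (set es)) (\<xi>(e:=a)) * cyl_exp f (insert e (set es)) (\<zeta>(e:=b))" for a b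
    using Suc.IH[of "es @ [e]"] valid_hist_snoc_query[OF Suc.prems(1)] Suc.prems(2) e_def by auto
  have "hybrid indep (Suc k) es \<xi> \<zeta> =
     (\<Sum>a\<in>UNIV. (if a then cyl_bit_prob (set es) \<xi> e else 1 - cyl_bit_prob (set es) \<xi> e)
        * cyl_exp f (insert e (set es)) (\<xi>(e:=a))) *
     (\<Sum>b\<in>UNIV. (if b then cyl_bit_prob (set es) \<zeta> e else 1 - cyl_bit_prob (set es) \<zeta> e)
        * cyl_exp f (insert e (set es)) (\<zeta>(e:=b)))"
    by (simp add: Let_def e_def[symmetric] IH indep bit_coupling_indep sum_UNIV_bool algebra_simps)
  then show ?case unfolding cyl_exp_tower_sum[OF e] .
qed

lemma hybrid_all_coupled:
  "valid_hist es k \<Longrightarrow> length es + k = CARD('e) \<Longrightarrow> (\<forall>i\<ge>length es. \<not> indep i)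
   \<Longrightarrow> hybrid indep k es \<xi> \<xi> = cyl_exp (\<lambda>\<omega>. f \<omega> * f \<omega>) (set es) \<xi>"
proof (induction k arbitrary: es \<xi>)
  case 0
  then have "cylinder (set es) \<xi> = {\<xi>}" using valid_hist_full cylinder_UNIV by simp
  then show ?case by (cases "pmf \<mu> \<xi> = 0") (simp_all add: cyl_exp_def cyl_sum_def cyl_prob_def)
next
  case (Suc k)
  define e where "e = query es \<xi>"
  have e: "e \<notin> set es" using query_notin[OF Suc.prems(1)] e_def by simp
  have indep: "\<not> indep (length es)" using Suc.prems by auto
  have IH: "hybrid indep k (es @ [e]) (\<xi>(e:=a)) (\<xi>(e:=a))
      = cyl_exp (\<lambda>\<omega>. f \<omega> * f \<omega>) (insert e (set es)) (\<xi>(e:=a))" for a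
    using Suc.IH[of "es @ [e]"] valid_hist_snoc_query[OF Suc.prems(1)] Suc.prems(2,3) e_def by auto
  have "hybrid indep (Suc k) es \<xi> \<xi> =
     (\<Sum>a\<in>UNIV. (if a then cyl_bit_prob (set es) \<xi> e else 1 - cyl_bit_prob (set es) \<xi> e)
        * cyl_exp (\<lambda>\<omega>. f \<omega> * f \<omega>) (insert e (set es)) (\<xi>(e:=a)))"
    by (simp add: Let_def e_def[symmetric] IH indep bit_coupling_diag sum_UNIV_bool)
  then show ?case unfolding cyl_exp_tower_sum[OF e] .
qed

lemma hybrid_determined:
  "valid_hist es k \<Longrightarrow> cyl_prob (set es) \<xi> > 0 \<Longrightarrow> cyl_prob (set es) \<zeta> > 0 \<Longrightarrow> (\<forall>\<omega>\<in>cylinder (set es) \<xi>. f \<omega> = c)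
   \<Longrightarrow> hybrid indep k es \<xi> \<zeta> = c * cyl_exp f (set es) \<zeta>"
proof (induction k arbitrary: es \<xi> \<zeta>)
  case 0
  then show ?case using cyl_exp_const[of "set es" \<xi> f c] by simp
next
  case (Suc k)
  define e where "e = query es \<xi>"
  have e: "e \<notin> set es" using query_notin[OF Suc.prems(1)] e_def by simp
  define p where "p = cyl_bit_prob (set es) \<xi> e"
  define q where "q = cyl_bit_prob (set es) \<zeta> e"
  have bounds: "0 \<le> p" "p \<le> 1" "0 \<le> q" "q \<le> 1" using cyl_bit_prob_bounds[OF e] p_def q_def by auto
  have weighted: "bit_coupling (indep (length es)) p q a b * hybrid indep k (es @ [e]) (\<xi>(e:=a)) (\<zeta>(e:=b))
     = bit_coupling (indep (length es)) p q a b * (c * cyl_exp f (insert e (set es)) (\<zeta>(e:=b)))" for a b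
  proof (cases "bit_coupling (indep (length es)) p q a b = 0")
    case False
    then have "0 < bit_coupling (indep (length es)) p q a b"
      using bit_coupling_nonneg[OF bounds] by (metis less_eq_real_def)
    note pos = bit_coupling_posD[OF bounds this]
    have "hybrid indep k (es @ [e]) (\<xi>(e:=a)) (\<zeta>(e:=b)) = c * cyl_exp f (set (es @ [e])) (\<zeta>(e:=b))"
    proof (rule Suc.IH)
      show "valid_hist (es @ [e]) k" using valid_hist_snoc_query[OF Suc.prems(1)] e_def by simp
      show "0 < cyl_prob (set (es @ [e])) (\<xi>(e:=a))" using cyl_prob_child_pos[OF e Suc.prems(2)] pos p_def by simp
      show "0 < cyl_prob (set (es @ [e])) (\<zeta>(e:=b))" using cyl_prob_child_pos[OF e Suc.prems(3)] pos q_def by simp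
      show "\<forall>\<omega>\<in>cylinder (set (es @ [e])) (\<xi>(e:=a)). f \<omega> = c"
        using Suc.prems(4) cylinder_insert_subset[OF e, of \<xi> a] by auto
    qed
    then show ?thesis by simp
  qed simp
  have "hybrid indep (Suc k) es \<xi> \<zeta>
      = (\<Sum>a\<in>UNIV. \<Sum>b\<in>UNIV. bit_coupling (indep (length es)) p q a b * (c * cyl_exp f (insert e (set es)) (\<zeta>(e:=b))))"
    by (simp only: hybrid.simps Let_def e_def[symmetric] p_def[symmetric] q_def[symmetric] weighted set_append)
  also have "\<dots> = c * (\<Sum>b\<in>UNIV. (\<Sum>a\<in>UNIV. bit_coupling (indep (length es)) p q a b)
      * cyl_exp f (insert e (set es)) (\<zeta>(e:=b)))"
    unfolding sum_UNIV_bool by (simp add: algebra_simps)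
  also have "\<dots> = c * (\<Sum>b\<in>UNIV. (if b then q else 1 - q) * cyl_exp f (insert e (set es)) (\<zeta>(e:=b)))"
    unfolding bit_coupling_marginal2 ..
  also have "\<dots> = c * cyl_exp f (set es) \<zeta>" unfolding q_def cyl_exp_tower_sum[OF e] ..
  finally show ?case .
qed

text \<open>With all remaining steps coupled, raising the boundary condition of the second
  configuration raises the hybrid by at most the rise of the conditional expectation of f: the
  three-bit coupling runs both hybrids on a common first configuration.\<close>

lemma hybrid_coupled_diff_bounds:
  assumes "valid_hist es k" "\<forall>i\<ge>length es. \<not> indep i"
    and "0 < cyl_prob (set es) \<xi>" "0 < cyl_prob (set es) \<zeta>1" "0 < cyl_prob (set es) \<zeta>0"
    and "\<forall>e\<in>set es. \<zeta>0 e \<le> \<zeta>1 e"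
  shows "0 \<le> hybrid indep k es \<xi> \<zeta>1 - hybrid indep k es \<xi> \<zeta>0 \<and>
         hybrid indep k es \<xi> \<zeta>1 - hybrid indep k es \<xi> \<zeta>0 \<le> cyl_exp f (set es) \<zeta>1 - cyl_exp f (set es) \<zeta>0"
  using assms
proof (induction k arbitrary: es \<xi> \<zeta>1 \<zeta>0)
  case 0
  have "cyl_exp f (set es) \<zeta>0 \<le> cyl_exp f (set es) \<zeta>1" by (rule cyl_exp_mono[OF mono_f]) (use 0 in auto)
  moreover have "0 \<le> cyl_exp f (set es) \<xi>" "cyl_exp f (set es) \<xi> \<le> 1" using cyl_exp_bounds[OF f_bounds] by auto
  ultimately show ?case by (simp add: right_diff_distrib[symmetric] mult_left_le_one_le)
next
  case (Suc k)
  define e where "e = query es \<xi>"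
  have e: "e \<notin> set es" using query_notin[OF Suc.prems(1)] e_def by simp
  define p where "p = cyl_bit_prob (set es) \<xi> e"
  define q1 where "q1 = cyl_bit_prob (set es) \<zeta>1 e"
  define q0 where "q0 = cyl_bit_prob (set es) \<zeta>0 e"
  have "q0 \<le> q1" unfolding q0_def q1_def by (rule cyl_bit_prob_mono[OF e]) (use Suc.prems in auto)
  then have bounds: "0 \<le> p" "p \<le> 1" "0 \<le> q0" "q0 \<le> q1" "q1 \<le> 1"
    using cyl_bit_prob_bounds[OF e] p_def q1_def q0_def by auto
  define K1 where "K1 a b = hybrid indep k (es @ [e]) (\<xi>(e:=a)) (\<zeta>1(e:=b))" for a b
  define K0 where "K0 a c = hybrid indep k (es @ [e]) (\<xi>(e:=a)) (\<zeta>0(e:=c))" for a c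
  define E1 where "E1 b = cyl_exp f (insert e (set es)) (\<zeta>1(e:=b))" for b
  define E0 where "E0 c = cyl_exp f (insert e (set es)) (\<zeta>0(e:=c))" for c
  have "indep (length es) = False" using Suc.prems(2) by auto
  then have hybrid1: "hybrid indep (Suc k) es \<xi> \<zeta>1 = (\<Sum>a\<in>UNIV. \<Sum>b\<in>UNIV. bit_coupling False p q1 a b * K1 a b)"
    and hybrid0: "hybrid indep (Suc k) es \<xi> \<zeta>0 = (\<Sum>a\<in>UNIV. \<Sum>c\<in>UNIV. bit_coupling False p q0 a c * K0 a c)"
    by (simp_all only: hybrid.simps Let_def e_def[symmetric] p_def[symmetric] q1_def[symmetric]
        q0_def[symmetric] K1_def K0_def)
  have IH: "0 \<le> K1 a b - K0 a c \<and> K1 a b - K0 a c \<le> E1 b - E0 c"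
    if "0 < bit_coupling3 p q1 q0 a b c" for a b c
  proof -
    note pos = bit_coupling3_posD[OF bounds that]
    have "0 \<le> K1 a b - K0 a c \<and>
        K1 a b - K0 a c \<le> cyl_exp f (set (es @ [e])) (\<zeta>1(e:=b)) - cyl_exp f (set (es @ [e])) (\<zeta>0(e:=c))"
      unfolding K1_def K0_def
    proof (rule Suc.IH)
      show "valid_hist (es @ [e]) k" using valid_hist_snoc_query[OF Suc.prems(1)] e_def by simp
      show "\<forall>i\<ge>length (es @ [e]). \<not> indep i" using Suc.prems(2) by auto
      show "0 < cyl_prob (set (es @ [e])) (\<xi>(e:=a))" "0 < cyl_prob (set (es @ [e])) (\<zeta>1(e:=b))"
        "0 < cyl_prob (set (es @ [e])) (\<zeta>0(e:=c))"
        using cyl_prob_child_pos[OF e] Suc.prems(3-5) pos p_def q1_def q0_def by simp_all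
      show "\<forall>x\<in>set (es @ [e]). (\<zeta>0(e:=c)) x \<le> (\<zeta>1(e:=b)) x" using Suc.prems(6) pos by auto
    qed
    then show ?thesis unfolding E1_def E0_def by simp
  qed
  show ?case
    unfolding hybrid1 hybrid0
    using coupled_sums_diff_bounds[where w="bit_coupling3 p q1 q0"
        and ?K1.0=K1 and ?K0.0=K0 and ?E1.0=E1 and ?E0.0=E0,
        OF bit_coupling3_marginal_ab[OF bounds, symmetric] bit_coupling3_marginal_ac[OF bounds, symmetric]
        bit_coupling3_nonneg[OF bounds] IH]
    unfolding bit_coupling_marginal2 E1_def E0_def q1_def q0_def cyl_exp_tower_sum[OF e] .
qed

text \<open>switch_cost j bounds the effect of switching step j from coupled to independent: after
  j independent steps it pays the covariance of f with the next queried bit, conditioned on the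
  values revealed in the second configuration.\<close>

fun switch_cost :: "nat \<Rightarrow> 'e list \<Rightarrow> ('e \<Rightarrow> bool) \<Rightarrow> ('e \<Rightarrow> bool) \<Rightarrow> real" where
  "switch_cost 0 es \<xi> \<zeta> = (if determined es \<xi> then 0 else cyl_cov f (coord (query es \<xi>)) (set es) \<zeta>)"
| "switch_cost (Suc j) es \<xi> \<zeta> = (let e = query es \<xi>; p = cyl_bit_prob (set es) \<xi> e; q = cyl_bit_prob (set es) \<zeta> e in
     (\<Sum>a\<in>UNIV. \<Sum>b\<in>UNIV. bit_coupling True p q a b * switch_cost j (es @ [e]) (\<xi>(e:=a)) (\<zeta>(e:=b))))"

lemma switch_cost_nonneg: "valid_hist es (Suc j) \<Longrightarrow> 0 \<le> switch_cost j es \<xi> \<zeta>"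
proof (induction j arbitrary: es \<xi> \<zeta>)
  case 0
  then show ?case using cyl_cov_coord_nonneg[OF mono_f query_notin[OF 0]] by simp
next
  case (Suc j)
  define e where "e = query es \<xi>"
  have e: "e \<notin> set es" using query_notin[OF Suc.prems(1)] e_def by simp
  have bounds: "0 \<le> cyl_bit_prob (set es) \<xi> e" "cyl_bit_prob (set es) \<xi> e \<le> 1"
    "0 \<le> cyl_bit_prob (set es) \<zeta> e" "cyl_bit_prob (set es) \<zeta> e \<le> 1"
    using cyl_bit_prob_bounds[OF e] by auto
  have "0 \<le> switch_cost j (es @ [e]) (\<xi>(e:=a)) (\<zeta>(e:=b))" for a b
    by (rule Suc.IH) (use valid_hist_snoc_query[OF Suc.prems(1)] e_def in simp)
  then show ?case using bit_coupling_nonneg[OF bounds]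
    by (simp add: Let_def e_def[symmetric] sum_nonneg)
qed

lemma hybrid_switch_diff:
  fixes \<xi> \<zeta> :: "'e \<Rightarrow> bool" and k :: nat
  assumes "length es = m"
  defines "e \<equiv> query es \<xi>"
  defines "p \<equiv> cyl_bit_prob (set es) \<xi> e" and "q \<equiv> cyl_bit_prob (set es) \<zeta> e"
  defines "K \<equiv> \<lambda>a b. hybrid (\<lambda>i. i < m) k (es @ [e]) (\<xi>(e:=a)) (\<zeta>(e:=b))"
  shows "hybrid (\<lambda>i. i < m) (Suc k) es \<xi> \<zeta> - hybrid (\<lambda>i. i < Suc m) (Suc k) es \<xi> \<zeta>
     = (min p q - p * q) * ((K True True - K True False) - (K False True - K False False))"
proof -
  have same_tail: "hybrid (\<lambda>i. i < Suc m) k (es @ [e]) (\<xi>(e:=a)) (\<zeta>(e:=b)) = K a b" for a b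
    unfolding K_def by (rule hybrid_cong) (use assms(1) in auto)
  have "(length es < m) = False" "(length es < Suc m) = True" using assms(1) by auto
  then have coupled: "hybrid (\<lambda>i. i < m) (Suc k) es \<xi> \<zeta> = (\<Sum>a\<in>UNIV. \<Sum>b\<in>UNIV. bit_coupling False p q a b * K a b)"
    and indep: "hybrid (\<lambda>i. i < Suc m) (Suc k) es \<xi> \<zeta> = (\<Sum>a\<in>UNIV. \<Sum>b\<in>UNIV. bit_coupling True p q a b * K a b)"
    by (simp_all only: hybrid.simps Let_def e_def[symmetric] p_def[symmetric] q_def[symmetric]
        same_tail K_def)
  have shift: "bit_coupling False p q a b
      = bit_coupling True p q a b + (if a = b then 1 else -1) * (min p q - p * q)" for a b
    using bit_coupling_coupled_minus_indep[of p q a b] by simp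
  show ?thesis unfolding coupled indep shift sum_UNIV_bool by (simp add: algebra_simps)
qed

lemma hybrid_cross_diff_le:
  fixes \<xi> \<zeta> :: "'e \<Rightarrow> bool" and k :: nat
  assumes hist: "valid_hist es (Suc k)" and len: "length es = m"
  defines "e \<equiv> query es \<xi>"
  defines "K \<equiv> \<lambda>a b. hybrid (\<lambda>i. i < m) k (es @ [e]) (\<xi>(e:=a)) (\<zeta>(e:=b))"
  assumes pos_\<xi>: "\<And>a. 0 < cyl_prob (insert e (set es)) (\<xi>(e:=a))"
    and pos_\<zeta>: "\<And>b. 0 < cyl_prob (insert e (set es)) (\<zeta>(e:=b))"
  shows "(K True True - K True False) - (K False True - K False False)
     \<le> (if determined es \<xi> then 0
         else cyl_exp f (insert e (set es)) (\<zeta>(e:=True)) - cyl_exp f (insert e (set es)) (\<zeta>(e:=False)))"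
proof -
  have e: "e \<notin> set es" using query_notin[OF hist] e_def by simp
  have hist': "valid_hist (es @ [e]) k" using valid_hist_snoc_query[OF hist] e_def by simp
  show ?thesis
  proof (cases "determined es \<xi>")
    case True
    have "K a b = f \<xi> * cyl_exp f (set (es @ [e])) (\<zeta>(e:=b))" for a b
      unfolding K_def
    proof (rule hybrid_determined[OF hist'])
      show "\<forall>\<omega>\<in>cylinder (set (es @ [e])) (\<xi>(e:=a)). f \<omega> = f \<xi>"
        using True cylinder_insert_subset[OF e, of \<xi> a] unfolding determined_def by auto
    qed (use pos_\<xi> pos_\<zeta> in auto)
    then show ?thesis using True by simp
  next
    case False
    have "0 \<le> K a True - K a False \<and>
        K a True - K a False \<le> cyl_exp f (set (es @ [e])) (\<zeta>(e:=True)) - cyl_exp f (set (es @ [e])) (\<zeta>(e:=False))"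
      for a unfolding K_def
      by (rule hybrid_coupled_diff_bounds[OF hist']) (use pos_\<xi> pos_\<zeta> len in auto)
    from this[of True] this[of False] show ?thesis using False by simp
  qed
qed

lemma hybrid_switch_le:
  assumes hist: "valid_hist es (Suc k)" and len: "length es = m"
  shows "hybrid (\<lambda>i. i < m) (Suc k) es \<xi> \<zeta> - hybrid (\<lambda>i. i < Suc m) (Suc k) es \<xi> \<zeta> \<le> switch_cost 0 es \<xi> \<zeta>"
proof -
  define e where "e = query es \<xi>"
  have e: "e \<notin> set es" using query_notin[OF hist] e_def by simp
  define p where "p = cyl_bit_prob (set es) \<xi> e"
  define q where "q = cyl_bit_prob (set es) \<zeta> e"
  define lam where "lam = min p q - p * q"
  define K where "K a b = hybrid (\<lambda>i. i < m) k (es @ [e]) (\<xi>(e:=a)) (\<zeta>(e:=b))" for a b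
  define E1 where "E1 = cyl_exp f (insert e (set es)) (\<zeta>(e:=True))"
  define E0 where "E0 = cyl_exp f (insert e (set es)) (\<zeta>(e:=False))"
  have "0 \<le> p" "p \<le> 1" "0 \<le> q" "q \<le> 1" using cyl_bit_prob_bounds[OF e] p_def q_def by auto
  note lam = min_minus_mult_bounds[OF this, folded lam_def]
  have diff: "hybrid (\<lambda>i. i < m) (Suc k) es \<xi> \<zeta> - hybrid (\<lambda>i. i < Suc m) (Suc k) es \<xi> \<zeta>
      = lam * ((K True True - K True False) - (K False True - K False False))"
    unfolding lam_def K_def e_def p_def q_def by (rule hybrid_switch_diff[OF len])
  have cost: "switch_cost 0 es \<xi> \<zeta> = (if determined es \<xi> then 0 else q * (1 - q) * (E1 - E0))"
    by (simp add: e_def[symmetric] cyl_cov_coord[OF e] q_def E1_def E0_def)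
  show ?thesis
  proof (cases "0 < lam")
    case False
    then have "lam = 0" using lam(1) by linarith
    moreover have "0 \<le> switch_cost 0 es \<xi> \<zeta>"
      by (rule switch_cost_nonneg) (use hist in \<open>simp add: valid_hist_def\<close>)
    ultimately show ?thesis unfolding diff by simp
  next
    case True
    then have pq: "0 < p" "p < 1" "0 < q" "q < 1" using lam(3) by auto
    then have pos: "0 < cyl_prob (insert e (set es)) (\<xi>(e:=a))" "0 < cyl_prob (insert e (set es)) (\<zeta>(e:=a))" for a
      using cyl_prob_children_pos[OF e] p_def q_def by auto
    then have "E0 \<le> E1" unfolding E0_def E1_def by (intro cyl_exp_mono[OF mono_f]) auto
    have "lam * ((K True True - K True False) - (K False True - K False False))
        \<le> lam * (if determined es \<xi> then 0 else E1 - E0)"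
      using True hybrid_cross_diff_le[OF hist len, of \<xi> \<zeta>, folded e_def] pos
      unfolding K_def E1_def E0_def by (intro mult_left_mono) auto
    also have "\<dots> \<le> switch_cost 0 es \<xi> \<zeta>"
      unfolding cost using lam(2) \<open>E0 \<le> E1\<close> by (auto intro: mult_right_mono)
    finally show ?thesis unfolding diff .
  qed
qed

lemma hybrid_diff_le_switch_cost:
  assumes "valid_hist es k" "length es + k = CARD('e)" "length es + j = m" "m < CARD('e)"
  shows "hybrid (\<lambda>i. i < m) k es \<xi> \<zeta> - hybrid (\<lambda>i. i < Suc m) k es \<xi> \<zeta> \<le> switch_cost j es \<xi> \<zeta>"
  using assms
proof (induction j arbitrary: es k \<xi> \<zeta>)
  case 0
  then obtain k' where k: "k = Suc k'" by (cases k) auto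
  show ?case unfolding k by (rule hybrid_switch_le) (use 0 k in auto)
next
  case (Suc j)
  then obtain k' where k: "k = Suc k'" by (cases k) auto
  have hist: "valid_hist es (Suc k')" using Suc.prems k by simp
  define e where "e = query es \<xi>"
  have e: "e \<notin> set es" using query_notin[OF hist] e_def by simp
  define p where "p = cyl_bit_prob (set es) \<xi> e"
  define q where "q = cyl_bit_prob (set es) \<zeta> e"
  have bounds: "0 \<le> p" "p \<le> 1" "0 \<le> q" "q \<le> 1" using cyl_bit_prob_bounds[OF e] p_def q_def by auto
  have s1: "(length es < m) = True" "(length es < Suc m) = True" using Suc.prems by auto
  have IH: "hybrid (\<lambda>i. i < m) k' (es @ [e]) (\<xi>(e:=a)) (\<zeta>(e:=b))
      - hybrid (\<lambda>i. i < Suc m) k' (es @ [e]) (\<xi>(e:=a)) (\<zeta>(e:=b))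
     \<le> switch_cost j (es @ [e]) (\<xi>(e:=a)) (\<zeta>(e:=b))" for a b
    by (rule Suc.IH) (use Suc.prems valid_hist_snoc_query[OF hist] e_def k in auto)
  have "hybrid (\<lambda>i. i < m) k es \<xi> \<zeta> - hybrid (\<lambda>i. i < Suc m) k es \<xi> \<zeta> =
     (\<Sum>a\<in>UNIV. \<Sum>b\<in>UNIV. bit_coupling True p q a b *
        (hybrid (\<lambda>i. i < m) k' (es @ [e]) (\<xi>(e:=a)) (\<zeta>(e:=b))
         - hybrid (\<lambda>i. i < Suc m) k' (es @ [e]) (\<xi>(e:=a)) (\<zeta>(e:=b))))"
    unfolding k by (simp only: hybrid.simps Let_def e_def[symmetric] p_def[symmetric] q_def[symmetric] s1
        if_True sum_subtractf right_diff_distrib)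
  also have "\<dots> \<le> (\<Sum>a\<in>UNIV. \<Sum>b\<in>UNIV. bit_coupling True p q a b * switch_cost j (es @ [e]) (\<xi>(e:=a)) (\<zeta>(e:=b)))"
    by (intro sum_mono mult_left_mono IH bit_coupling_nonneg bounds)
  also have "\<dots> = switch_cost (Suc j) es \<xi> \<zeta>"
    by (simp only: switch_cost.simps Let_def e_def[symmetric] p_def[symmetric] q_def[symmetric])
  finally show ?case .
qed

text \<open>The same cost with only the first configuration explored; the second one enters only
  through the conditioning on its values on G.\<close>

fun revealed_cov :: "nat \<Rightarrow> 'e list \<Rightarrow> ('e \<Rightarrow> bool) \<Rightarrow> 'e set \<Rightarrow> ('e \<Rightarrow> bool) \<Rightarrow> real" where
  "revealed_cov 0 es \<xi> G \<zeta> = (if determined es \<xi> then 0 else cyl_cov f (coord (query es \<xi>)) G \<zeta>)"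
| "revealed_cov (Suc j) es \<xi> G \<zeta> = (let e = query es \<xi>; p = cyl_bit_prob (set es) \<xi> e in
     (\<Sum>a\<in>UNIV. (if a then p else 1 - p) * revealed_cov j (es @ [e]) (\<xi>(e:=a)) G \<zeta>))"

lemma revealed_cov_refine_le:
  assumes "valid_hist es j" "r \<notin> G"
  shows "cyl_bit_prob G \<zeta> r * revealed_cov j es \<xi> (insert r G) (\<zeta>(r:=True))
       + (1 - cyl_bit_prob G \<zeta> r) * revealed_cov j es \<xi> (insert r G) (\<zeta>(r:=False))
         \<le> revealed_cov j es \<xi> G \<zeta>"
  using assms(1)
proof (induction j arbitrary: es \<xi>)
  case 0
  show ?case
    using cyl_cov_children_le[OF mono_f mono_coord assms(2), of \<zeta> "query es \<xi>"]
    by (cases "determined es \<xi>")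
      (simp_all only: revealed_cov.simps if_True if_False mult_zero_right add_0 order_refl)
next
  case (Suc j)
  define e where "e = query es \<xi>"
  have e: "e \<notin> set es" using query_notin[OF Suc.prems] e_def by simp
  define p where "p = cyl_bit_prob (set es) \<xi> e"
  define u where "u = cyl_bit_prob G \<zeta> r"
  have bounds: "0 \<le> p" "p \<le> 1" using cyl_bit_prob_bounds[OF e] p_def by auto
  have IH: "u * revealed_cov j (es @ [e]) (\<xi>(e:=a)) (insert r G) (\<zeta>(r:=True))
      + (1 - u) * revealed_cov j (es @ [e]) (\<xi>(e:=a)) (insert r G) (\<zeta>(r:=False))
       \<le> revealed_cov j (es @ [e]) (\<xi>(e:=a)) G \<zeta>" for a
    unfolding u_def by (rule Suc.IH) (use valid_hist_snoc_query[OF Suc.prems] e_def in auto)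
  have "u * revealed_cov (Suc j) es \<xi> (insert r G) (\<zeta>(r:=True))
      + (1 - u) * revealed_cov (Suc j) es \<xi> (insert r G) (\<zeta>(r:=False))
      = (\<Sum>a\<in>UNIV. (if a then p else 1 - p) * (u * revealed_cov j (es @ [e]) (\<xi>(e:=a)) (insert r G) (\<zeta>(r:=True))
          + (1 - u) * revealed_cov j (es @ [e]) (\<xi>(e:=a)) (insert r G) (\<zeta>(r:=False))))"
    by (simp add: Let_def e_def[symmetric] p_def[symmetric] sum_UNIV_bool algebra_simps)
  also have "\<dots> \<le> (\<Sum>a\<in>UNIV. (if a then p else 1 - p) * revealed_cov j (es @ [e]) (\<xi>(e:=a)) G \<zeta>)"
    using bounds by (intro sum_mono mult_left_mono IH) auto
  also have "\<dots> = revealed_cov (Suc j) es \<xi> G \<zeta>"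
    by (simp only: revealed_cov.simps Let_def e_def[symmetric] p_def[symmetric])
  finally show ?case unfolding u_def .
qed

lemma switch_cost_le_revealed_cov: "valid_hist es (Suc j) \<Longrightarrow> switch_cost j es \<xi> \<zeta> \<le> revealed_cov j es \<xi> (set es) \<zeta>"
proof (induction j arbitrary: es \<xi> \<zeta>)
  case 0
  then show ?case by simp
next
  case (Suc j)
  define e where "e = query es \<xi>"
  have e: "e \<notin> set es" using query_notin[OF Suc.prems(1)] e_def by simp
  define p where "p = cyl_bit_prob (set es) \<xi> e"
  define q where "q = cyl_bit_prob (set es) \<zeta> e"
  have bounds: "0 \<le> p" "p \<le> 1" "0 \<le> q" "q \<le> 1" using cyl_bit_prob_bounds[OF e] p_def q_def by auto
  have hist: "valid_hist (es @ [e]) (Suc j)" using valid_hist_snoc_query[OF Suc.prems(1)] e_def by simp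
  have IH: "switch_cost j (es @ [e]) (\<xi>(e:=a)) (\<zeta>(e:=b))
      \<le> revealed_cov j (es @ [e]) (\<xi>(e:=a)) (insert e (set es)) (\<zeta>(e:=b))" for a b
    using Suc.IH[OF hist] by simp
  have refine: "q * revealed_cov j (es @ [e]) (\<xi>(e:=a)) (insert e (set es)) (\<zeta>(e:=True))
      + (1 - q) * revealed_cov j (es @ [e]) (\<xi>(e:=a)) (insert e (set es)) (\<zeta>(e:=False))
     \<le> revealed_cov j (es @ [e]) (\<xi>(e:=a)) (set es) \<zeta>" for a
    unfolding q_def by (rule revealed_cov_refine_le[OF _ e]) (use hist valid_hist_def in auto)
  have "switch_cost (Suc j) es \<xi> \<zeta>
      = (\<Sum>a\<in>UNIV. \<Sum>b\<in>UNIV. bit_coupling True p q a b * switch_cost j (es @ [e]) (\<xi>(e:=a)) (\<zeta>(e:=b)))"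
    by (simp only: switch_cost.simps Let_def e_def[symmetric] p_def[symmetric] q_def[symmetric])
  also have "\<dots> \<le> (\<Sum>a\<in>UNIV. \<Sum>b\<in>UNIV. bit_coupling True p q a b
      * revealed_cov j (es @ [e]) (\<xi>(e:=a)) (insert e (set es)) (\<zeta>(e:=b)))"
    by (intro sum_mono mult_left_mono IH bit_coupling_nonneg bounds)
  also have "\<dots> = (\<Sum>a\<in>UNIV. (if a then p else 1 - p) *
        (q * revealed_cov j (es @ [e]) (\<xi>(e:=a)) (insert e (set es)) (\<zeta>(e:=True))
        + (1 - q) * revealed_cov j (es @ [e]) (\<xi>(e:=a)) (insert e (set es)) (\<zeta>(e:=False))))"
    by (simp add: sum_UNIV_bool bit_coupling_indep algebra_simps)
  also have "\<dots> \<le> (\<Sum>a\<in>UNIV. (if a then p else 1 - p) * revealed_cov j (es @ [e]) (\<xi>(e:=a)) (set es) \<zeta>)"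
    using bounds by (intro sum_mono mult_left_mono refine) auto
  also have "\<dots> = revealed_cov (Suc j) es \<xi> (set es) \<zeta>"
    by (simp only: revealed_cov.simps Let_def e_def[symmetric] p_def[symmetric])
  finally show ?case .
qed


section \<open>Averaging over the decision tree\<close>

fun explore :: "'e list \<Rightarrow> ('e \<Rightarrow> bool) \<Rightarrow> nat \<Rightarrow> 'e list" where
  "explore es \<omega> 0 = es"
| "explore es \<omega> (Suc j) = explore (es @ [query es \<omega>]) \<omega> j"

lemma cyl_sum_revealed_cov:
  "valid_hist es j \<Longrightarrow>
     cyl_sum (set es) \<xi> (\<lambda>\<omega>. revealed_cov 0 (explore es \<omega> j) \<omega> G \<zeta>) = cyl_prob (set es) \<xi> * revealed_cov j es \<xi> G \<zeta>"
proof (induction j arbitrary: es \<xi>)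
  case 0
  have "cyl_sum (set es) \<xi> (\<lambda>\<omega>. revealed_cov 0 (explore es \<omega> 0) \<omega> G \<zeta>)
      = cyl_sum (set es) \<xi> (\<lambda>_. revealed_cov 0 es \<xi> G \<zeta>)"
    by (rule cyl_sum_cong) (simp add: query_cylinder determined_cylinder)
  then show ?case by (simp add: cyl_sum_const)
next
  case (Suc j)
  define e where "e = query es \<xi>"
  have e: "e \<notin> set es" using query_notin[OF Suc.prems] e_def by simp
  have hist: "valid_hist (es @ [e]) j" using valid_hist_snoc_query[OF Suc.prems] e_def by simp
  define g where "g = (\<lambda>\<omega>. revealed_cov 0 (explore (es @ [e]) \<omega> j) \<omega> G \<zeta>)"
  have "cyl_sum (set es) \<xi> (\<lambda>\<omega>. revealed_cov 0 (explore es \<omega> (Suc j)) \<omega> G \<zeta>) = cyl_sum (set es) \<xi> g"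
    unfolding g_def by (rule cyl_sum_cong) (simp add: query_cylinder e_def)
  also have "\<dots> = cyl_sum (insert e (set es)) (\<xi>(e:=True)) g + cyl_sum (insert e (set es)) (\<xi>(e:=False)) g"
    by (rule cyl_sum_split[OF e])
  also have "\<dots> = cyl_prob (insert e (set es)) (\<xi>(e:=True)) * revealed_cov j (es @ [e]) (\<xi>(e:=True)) G \<zeta>
      + cyl_prob (insert e (set es)) (\<xi>(e:=False)) * revealed_cov j (es @ [e]) (\<xi>(e:=False)) G \<zeta>"
    using Suc.IH[OF hist, of "\<xi>(e:=True)"] Suc.IH[OF hist, of "\<xi>(e:=False)"]
    unfolding g_def set_append by (simp only: set_simps Un_insert_right sup_bot_right)
  also have "\<dots> = cyl_prob (set es) \<xi> * revealed_cov (Suc j) es \<xi> G \<zeta>"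
    unfolding cyl_prob_children[OF e] by (simp add: Let_def e_def[symmetric] sum_UNIV_bool algebra_simps)
  finally show ?case .
qed

lemma dt_order_Suc: "dt_order \<phi> \<omega> (Suc t) = dt_order \<phi> \<omega> t @ [query (dt_order \<phi> \<omega> t) \<omega>]"
  by (simp add: query_def Let_def)

lemma explore_dt_order: "explore (dt_order \<phi> \<omega> t) \<omega> j = dt_order \<phi> \<omega> (t + j)"
proof (induction j arbitrary: t)
  case (Suc j)
  have "explore (dt_order \<phi> \<omega> t) \<omega> (Suc j) = explore (dt_order \<phi> \<omega> (Suc t)) \<omega> j"
    by (simp only: explore.simps dt_order_Suc)
  then show ?case using Suc.IH[of "Suc t"] by simp
qed simp

lemma length_dt_order: "length (dt_order \<phi> \<omega> t) = t"
  by (induction t) (simp_all add: Let_def)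

lemma dt_order_add: "\<exists>ys. dt_order \<phi> \<omega> (t + d) = dt_order \<phi> \<omega> t @ ys"
  by (induction d) (auto simp: Let_def)

lemma nth_dt_order: "i < t \<Longrightarrow> t \<le> t' \<Longrightarrow> dt_order \<phi> \<omega> t ! i = dt_order \<phi> \<omega> t' ! i"
  using dt_order_add[of \<omega> t "t' - t"] length_dt_order[of \<omega> t] by (auto simp: nth_append)

lemma set_dt_order_mono: "t \<le> t' \<Longrightarrow> set (dt_order \<phi> \<omega> t) \<subseteq> set (dt_order \<phi> \<omega> t')"
  using dt_order_add[of \<omega> t "t' - t"] by auto

lemma valid_hist_dt_order: "t \<le> CARD('e) \<Longrightarrow> valid_hist (dt_order \<phi> \<omega> t) (CARD('e) - t)"
proof (induction t)
  case 0
  then show ?case by (simp add: valid_hist_def)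
next
  case (Suc t)
  then have "valid_hist (dt_order \<phi> \<omega> t) (Suc (CARD('e) - Suc t))" by (simp add: Suc_diff_Suc)
  then show ?case using valid_hist_snoc_query unfolding dt_order_Suc by blast
qed

lemma set_dt_order_CARD: "set (dt_order \<phi> \<omega> CARD('e)) = UNIV"
  using valid_hist_full[of "dt_order \<phi> \<omega> CARD('e)"] valid_hist_dt_order[of "CARD('e)" \<omega>]
    length_dt_order by simp

lemma tau_spec:
  "1 \<le> tau f \<phi> \<omega> \<and> tau f \<phi> \<omega> \<le> CARD('e) \<and>
   (\<forall>\<omega>'. (\<forall>e\<in>set (dt_order \<phi> \<omega> (tau f \<phi> \<omega>)). \<omega>' e = \<omega> e) \<longrightarrow> f \<omega>' = f \<omega>)"
proof -
  let ?P = "\<lambda>t. 1 \<le> t \<and> (\<forall>\<omega>'. (\<forall>e\<in>set (dt_order \<phi> \<omega> t). \<omega>' e = \<omega> e) \<longrightarrow> f \<omega>' = f \<omega>)"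
  have "\<omega>' = \<omega>" if "\<forall>e\<in>set (dt_order \<phi> \<omega> CARD('e)). \<omega>' e = \<omega> e" for \<omega>'
    using that set_dt_order_CARD[of \<omega>] by auto
  then have "?P CARD('e)" by (auto simp: Suc_le_eq)
  then show ?thesis unfolding tau_def using LeastI[of ?P] Least_le[of ?P] by blast
qed

lemma lt_tau_if_not_determined: "\<not> determined (dt_order \<phi> \<omega> t) \<omega> \<Longrightarrow> t < tau f \<phi> \<omega>"
proof (rule ccontr)
  assume "\<not> determined (dt_order \<phi> \<omega> t) \<omega>" "\<not> t < tau f \<phi> \<omega>"
  moreover have "set (dt_order \<phi> \<omega> (tau f \<phi> \<omega>)) \<subseteq> set (dt_order \<phi> \<omega> t)"
    using calculation(2) by (intro set_dt_order_mono) simp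
  ultimately show False
    using tau_spec[of \<omega>] unfolding determined_def cylinder_def by blast
qed

lemma revealment_eq_prob:
  "revealment \<mu> f \<phi> e = measure_pmf.prob \<mu> {\<omega>. e \<in> set (dt_order \<phi> \<omega> (tau f \<phi> \<omega>))}"
proof -
  have "(\<exists>t. 1 \<le> t \<and> t \<le> tau f \<phi> \<omega> \<and> dt_order \<phi> \<omega> t ! (t - 1) = e)
    \<longleftrightarrow> e \<in> set (dt_order \<phi> \<omega> (tau f \<phi> \<omega>))" for \<omega>
    unfolding in_set_conv_nth length_dt_order
  proof safe
    fix t assume "1 \<le> t" "t \<le> tau f \<phi> \<omega>"
    then show "\<exists>i<tau f \<phi> \<omega>. dt_order \<phi> \<omega> (tau f \<phi> \<omega>) ! i = dt_order \<phi> \<omega> t ! (t - 1)"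
      using nth_dt_order[of "t - 1" t "tau f \<phi> \<omega>" \<omega>] by (intro exI[of _ "t - 1"]) auto
  next
    fix i assume "i < tau f \<phi> \<omega>"
    then show "\<exists>t. 1 \<le> t \<and> t \<le> tau f \<phi> \<omega> \<and> dt_order \<phi> \<omega> t ! (t - 1) = dt_order \<phi> \<omega> (tau f \<phi> \<omega>) ! i"
      using nth_dt_order[of i "Suc i" "tau f \<phi> \<omega>" \<omega>] by (intro exI[of _ "Suc i"]) auto
  qed
  then show ?thesis unfolding revealment_def by simp
qed

lemma sum_revealed_cov_le:
  "(\<Sum>t<CARD('e). revealed_cov 0 (dt_order \<phi> \<omega> t) \<omega> {} \<xi>)
     \<le> (\<Sum>e\<in>set (dt_order \<phi> \<omega> (tau f \<phi> \<omega>)). cyl_cov f (coord e) {} \<xi>)"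
proof -
  define m where "m = tau f \<phi> \<omega>"
  define D where "D = dt_order \<phi> \<omega> m"
  define cov where "cov e = cyl_cov f (coord e) {} \<xi>" for e
  have m: "m \<le> CARD('e)" using tau_spec m_def by blast
  have "revealed_cov 0 (dt_order \<phi> \<omega> t) \<omega> {} \<xi> \<le> (if t < m then cov (D ! t) else 0)" for t
  proof (cases "determined (dt_order \<phi> \<omega> t) \<omega>")
    case True
    then show ?thesis using cyl_cov_coord_nonneg[OF mono_f, of "D ! t" "{}"] by (simp add: cov_def)
  next
    case False
    then have "t < m" unfolding m_def by (rule lt_tau_if_not_determined)
    then have "dt_order \<phi> \<omega> (Suc t) ! t = D ! t"
      unfolding D_def by (intro nth_dt_order) auto
    then have "query (dt_order \<phi> \<omega> t) \<omega> = D ! t"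
      unfolding dt_order_Suc by (metis length_dt_order nth_append_length)
    with False \<open>t < m\<close> show ?thesis by (simp add: cov_def)
  qed
  then have "(\<Sum>t<CARD('e). revealed_cov 0 (dt_order \<phi> \<omega> t) \<omega> {} \<xi>)
      \<le> (\<Sum>t<CARD('e). if t < m then cov (D ! t) else 0)"
    by (rule sum_mono)
  also have "\<dots> = (\<Sum>t<m. cov (D ! t))"
  proof -
    have "{..<CARD('e)} \<inter> {t. t < m} = {..<m}" using m by auto
    then show ?thesis by (simp add: sum.If_cases)
  qed
  also have "\<dots> = sum_list (map cov D)"
    by (simp add: sum_list_sum_nth D_def length_dt_order atLeast0LessThan)
  also have "\<dots> = (\<Sum>e\<in>set D. cov e)"
    using valid_hist_dt_order[OF m, of \<omega>] by (simp add: sum_list_distinct_conv_sum_set valid_hist_def D_def)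
  finally show ?thesis unfolding cov_def D_def m_def .
qed

lemma sum_expectation_revealed_cov_le:
  "(\<Sum>t<CARD('e). measure_pmf.expectation \<mu> (\<lambda>\<omega>. revealed_cov 0 (dt_order \<phi> \<omega> t) \<omega> {} \<xi>))
     \<le> (\<Sum>e\<in>UNIV. revealment \<mu> f \<phi> e * covariance_pmf \<mu> f (coord e))"
proof -
  define R where "R \<omega> = set (dt_order \<phi> \<omega> (tau f \<phi> \<omega>))" for \<omega>
  define cov where "cov e = cyl_cov f (coord e) {} \<xi>" for e
  have "(\<Sum>t<CARD('e). measure_pmf.expectation \<mu> (\<lambda>\<omega>. revealed_cov 0 (dt_order \<phi> \<omega> t) \<omega> {} \<xi>))
      = (\<Sum>\<omega>\<in>UNIV. pmf \<mu> \<omega> * (\<Sum>t<CARD('e). revealed_cov 0 (dt_order \<phi> \<omega> t) \<omega> {} \<xi>))"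
    unfolding expectation_eq_sum sum_distrib_left by (rule sum.swap)
  also have "\<dots> \<le> (\<Sum>\<omega>\<in>UNIV. pmf \<mu> \<omega> * (\<Sum>e\<in>R \<omega>. cov e))"
    unfolding R_def cov_def by (intro sum_mono mult_left_mono sum_revealed_cov_le) auto
  also have "\<dots> = (\<Sum>\<omega>\<in>UNIV. \<Sum>e\<in>UNIV. if e \<in> R \<omega> then pmf \<mu> \<omega> * cov e else 0)"
    by (simp add: sum.If_cases sum_distrib_left)
  also have "\<dots> = (\<Sum>e\<in>UNIV. (\<Sum>\<omega>\<in>{\<omega>. e \<in> R \<omega>}. pmf \<mu> \<omega>) * cov e)"
    by (subst sum.swap) (simp add: sum.If_cases sum_distrib_right)
  also have "\<dots> = (\<Sum>e\<in>UNIV. revealment \<mu> f \<phi> e * covariance_pmf \<mu> f (coord e))"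
    unfolding revealment_eq_prob R_def cov_def covariance_pmf_eq_cyl_cov[of f _ \<xi>]
    by (simp add: measure_measure_pmf_finite)
  finally show ?thesis .
qed

lemma variance_eq_hybrid_diff:
  "measure_pmf.variance \<mu> f
     = hybrid (\<lambda>i. i < 0) CARD('e) [] \<xi> \<xi> - hybrid (\<lambda>i. i < CARD('e)) CARD('e) [] \<xi> \<xi>"
proof -
  have "valid_hist [] CARD('e)" by (simp add: valid_hist_def)
  then show ?thesis
    using hybrid_all_coupled[of "[]" "CARD('e)" "\<lambda>i. i < 0" \<xi>]
      hybrid_all_indep[of "[]" "CARD('e)" "\<lambda>i. i < CARD('e)" \<xi> \<xi>] variance_eq_cyl_cov[of f \<xi>]
    by (simp add: cyl_cov_def)
qed

lemma hybrid_step_le: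
  assumes "t < CARD('e)"
  shows "hybrid (\<lambda>i. i < t) CARD('e) [] \<xi> \<xi> - hybrid (\<lambda>i. i < Suc t) CARD('e) [] \<xi> \<xi>
     \<le> measure_pmf.expectation \<mu> (\<lambda>\<omega>. revealed_cov 0 (dt_order \<phi> \<omega> t) \<omega> {} \<xi>)"
proof -
  have "hybrid (\<lambda>i. i < t) CARD('e) [] \<xi> \<xi> - hybrid (\<lambda>i. i < Suc t) CARD('e) [] \<xi> \<xi>
      \<le> switch_cost t [] \<xi> \<xi>"
    by (rule hybrid_diff_le_switch_cost) (use assms in \<open>auto simp: valid_hist_def\<close>)
  also have "\<dots> \<le> revealed_cov t [] \<xi> {} \<xi>"
    using switch_cost_le_revealed_cov[of "[]" t \<xi> \<xi>] assms by (simp add: valid_hist_def)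
  also have "\<dots> = cyl_sum {} \<xi> (\<lambda>\<omega>. revealed_cov 0 (explore [] \<omega> t) \<omega> {} \<xi>)"
    using cyl_sum_revealed_cov[of "[]" t \<xi> "{}" \<xi>] assms by (simp add: valid_hist_def cyl_prob_empty)
  also have "\<dots> = measure_pmf.expectation \<mu> (\<lambda>\<omega>. revealed_cov 0 (dt_order \<phi> \<omega> t) \<omega> {} \<xi>)"
    using explore_dt_order[of _ 0 t] by (simp add: cyl_sum_def cylinder_empty expectation_eq_sum)
  finally show ?thesis .
qed

end

theorem theorem1p1:
  fixes f :: "('e::finite \<Rightarrow> bool) \<Rightarrow> real"
    and \<mu> :: "('e \<Rightarrow> bool) pmf"
    and \<phi> :: "('e \<times> bool) list \<Rightarrow> 'e"
  assumes "mono f"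
    and "\<And>\<omega>. 0 \<le> f \<omega> \<and> f \<omega> \<le> 1"
    and "monotonic_measure \<mu>"
    and "decision_tree \<phi>"
  shows "measure_pmf.variance \<mu> f
         \<le> (\<Sum>e\<in>UNIV. revealment \<mu> f \<phi> e * covariance_pmf \<mu> f (\<lambda>\<omega>. if \<omega> e then 1 else 0))"
proof -
  interpret osss \<mu> f \<phi> by unfold_locales (use assms in auto)
  define \<xi> :: "'e \<Rightarrow> bool" where "\<xi> = (\<lambda>_. False)"
  define c where "c t = hybrid (\<lambda>i. i < t) CARD('e) [] \<xi> \<xi>" for t
  have "measure_pmf.variance \<mu> f = c 0 - c CARD('e)"
    unfolding c_def by (rule variance_eq_hybrid_diff)
  also have "\<dots> = (\<Sum>t<CARD('e). c t - c (Suc t))"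
    by (rule sum_lessThan_telescope'[symmetric])
  also have "\<dots> \<le> (\<Sum>t<CARD('e). measure_pmf.expectation \<mu> (\<lambda>\<omega>. revealed_cov 0 (dt_order \<phi> \<omega> t) \<omega> {} \<xi>))"
    unfolding c_def by (intro sum_mono hybrid_step_le) simp
  also have "\<dots> \<le> (\<Sum>e\<in>UNIV. revealment \<mu> f \<phi> e * covariance_pmf \<mu> f (coord e))"
    by (rule sum_expectation_revealed_cov_le)
  finally show ?thesis unfolding coord_def .
qed

end
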